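(* Suppose $d\ge9$ and $k$ is an integer with $\frac d2+1<k\le\frac{2d}3$. If $x\ge\frac{5k-2d}{d-k}$, then $(x+1)f'(x)<k\,f(x)$.
   Context: $f(x)=\binom dk^{-1}\sum_{i=0}^{d-k}\binom ki\binom{d-k}{i}x^{k-i}$ (the probability generating function of the hypergeometric distribution with parameters $(d,k,k)$). *)

theory Defs
  imports "HOL-Analysis.Analysis"
begin

definition hyp_pgf :: "nat \<Rightarrow> nat \<Rightarrow> real \<Rightarrow> real" where
  "hyp_pgf d k x = (\<Sum>i=0..d-k. real (k choose i) * real ((d-k) choose i) * x ^ (k-i))
                    / real (d choose k)"

end

theory Submission
  imports Defs
begin

text \<open>With \<open>m = d - k\<close> one has \<open>f(x) \<propto> x^(k-m) M(x)\<close> where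
  \<open>M(x) = \<Sum>\<^sub>i (k choose i)(m choose i) x^(m-i)\<close>, so \<open>(x+1) f'(x) < k f(x)\<close> says that
  the gap \<open>k M - (x+1) S\<close> is negative, \<open>S\<close> being the first moment of the same weights;
  equivalently, the mean \<open>\<mu> = S/M\<close> of the weights exceeds \<open>k/(x+1)\<close>.
  Shifting the index gives \<open>x S = \<Sum>\<^sub>i w\<^sub>i (k-i)(m-i)/(i+1)\<close>, whose coefficient is a convex
  function of \<open>i+1\<close>; the harmonic-arithmetic mean inequality then yields
  \<open>(k-\<mu>)(m-\<mu>) \<le> x \<mu> (\<mu>+1)\<close>. Together with \<open>\<mu> \<le> k/(x+1)\<close> this forces
  \<open>2k \<ge> (m-1)(x+1)\<close>, which fails above the threshold \<open>x\<^sub>0 = (3k-2m)/m\<close> as soon as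
  \<open>m(m-1) < k(m-3)\<close>. The eleven remaining pairs \<open>(m,k)\<close> are checked numerically at \<open>x\<^sub>0\<close>:
  as a polynomial in \<open>x\<close> the gap has a single sign change in its coefficients, so
  negativity at \<open>x\<^sub>0\<close> persists for all \<open>x \<ge> x\<^sub>0\<close>.\<close>

lemma Suc_times_binomial_Suc: "Suc j * (n choose Suc j) = (n - j) * (n choose j)"
  using times_binomial_minus1_eq[of "Suc j" n] binomial_absorb_comp[of n j] by simp

lemma sum_weighted_inverse_ge:
  fixes w u :: "'a \<Rightarrow> real"
  assumes "\<And>i. i \<in> I \<Longrightarrow> 0 \<le> w i" and "\<And>i. i \<in> I \<Longrightarrow> 0 < u i"
  shows "(\<Sum>i\<in>I. w i)\<^sup>2 \<le> (\<Sum>i\<in>I. w i * u i) * (\<Sum>i\<in>I. w i / u i)"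
proof -
  have "sqrt (w i * u i) * sqrt (w i / u i) = w i" if "i \<in> I" for i
    using assms[OF that] by (simp flip: real_sqrt_mult add: power2_eq_square)
  then have "(\<Sum>i\<in>I. w i) = (\<Sum>i\<in>I. sqrt (w i * u i) * sqrt (w i / u i))"
    by simp
  moreover have "(\<Sum>i\<in>I. w i * u i) = (\<Sum>i\<in>I. (sqrt (w i * u i))\<^sup>2)"
    and "(\<Sum>i\<in>I. w i / u i) = (\<Sum>i\<in>I. (sqrt (w i / u i))\<^sup>2)"
    using assms by (auto intro!: sum.cong simp: less_imp_le)
  ultimately show ?thesis
    by (simp only: Cauchy_Schwarz_ineq_sum)
qed

lemma sum_powers_neg_mono:
  fixes a :: "'a \<Rightarrow> real" and n :: "'a \<Rightarrow> nat"
  assumes sign: "\<And>j. j \<in> A \<Longrightarrow> a j \<le> 0 \<and> e \<le> n j \<or> 0 \<le> a j \<and> n j \<le> e"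
    and "0 < y" "y \<le> x" and neg: "(\<Sum>j\<in>A. a j * y ^ n j) < 0"
  shows "(\<Sum>j\<in>A. a j * x ^ n j) < 0"
proof -
  define r where "r = x / y"
  have r: "1 \<le> r" and x: "x = y * r"
    using \<open>0 < y\<close> \<open>y \<le> x\<close> by (auto simp: r_def)
  have "a j * x ^ n j \<le> r ^ e * (a j * y ^ n j)" if "j \<in> A" for j
  proof -
    have "a j * r ^ n j \<le> a j * r ^ e"
      using sign[OF that] r by (auto intro: mult_left_mono mult_left_mono_neg power_increasing)
    from mult_right_mono[OF this, of "y ^ n j"] show ?thesis
      using \<open>0 < y\<close> by (simp add: x power_mult_distrib algebra_simps)
  qed
  then have "(\<Sum>j\<in>A. a j * x ^ n j) \<le> r ^ e * (\<Sum>j\<in>A. a j * y ^ n j)"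
    by (simp add: sum_distrib_left sum_mono)
  also have "\<dots> < 0"
    using r neg by (simp add: mult_pos_neg)
  finally show ?thesis .
qed

definition hyp_weight :: "nat \<Rightarrow> nat \<Rightarrow> real \<Rightarrow> nat \<Rightarrow> real" where
  "hyp_weight k m x i = real (k choose i) * real (m choose i) * x ^ (m - i)"

definition hyp_mass :: "nat \<Rightarrow> nat \<Rightarrow> real \<Rightarrow> real" where
  "hyp_mass k m x = (\<Sum>i=0..m. hyp_weight k m x i)"

definition hyp_moment :: "nat \<Rightarrow> nat \<Rightarrow> real \<Rightarrow> real" where
  "hyp_moment k m x = (\<Sum>i=0..m. real i * hyp_weight k m x i)"

definition hyp_gap :: "nat \<Rightarrow> nat \<Rightarrow> real \<Rightarrow> real" where
  "hyp_gap k m x = real k * hyp_mass k m x - (x + 1) * hyp_moment k m x"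

lemma hyp_weight_nonneg: "0 \<le> x \<Longrightarrow> 0 \<le> hyp_weight k m x i"
  by (simp add: hyp_weight_def)

lemma hyp_mass_pos: "0 < x \<Longrightarrow> 0 < hyp_mass k m x"
  unfolding hyp_mass_def
  by (rule sum_pos2[of _ 0]) (auto simp: hyp_weight_nonneg, simp add: hyp_weight_def)

lemma hyp_moment_pos: "0 < x \<Longrightarrow> 1 \<le> m \<Longrightarrow> 1 \<le> k \<Longrightarrow> 0 < hyp_moment k m x"
  unfolding hyp_moment_def
  by (rule sum_pos2[of _ 1]) (auto simp: hyp_weight_nonneg, simp add: hyp_weight_def)

lemma deriv_hyp_pgf:
  assumes "k \<le> d"
  shows "deriv (hyp_pgf d k) x = (\<Sum>i=0..d-k. real (k choose i) * real ((d-k) choose i)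
      * (real (k - i) * x ^ (k - i - 1))) / real (d choose k)"
proof -
  have "(hyp_pgf d k has_real_derivative (\<Sum>i=0..d-k. real (k choose i) * real ((d-k) choose i)
      * (real (k - i) * x ^ (k - i - 1))) / real (d choose k)) (at x)"
    unfolding hyp_pgf_def[abs_def]
    by (rule derivative_eq_intros refl)+ (use assms in \<open>auto intro!: sum.cong\<close>)
  then show ?thesis
    by (rule DERIV_imp_deriv)
qed

lemma hyp_pgf_gap:
  assumes "d = k + m" "m < k"
  shows "real k * hyp_pgf d k x - (x + 1) * deriv (hyp_pgf d k) x
    = - (x ^ (k - m - 1) * hyp_gap k m x / real (d choose k))"
proof -
  define p where "p = x ^ (k - m - 1)"
  have f: "hyp_pgf d k x = x * p * hyp_mass k m x / real (d choose k)"
  proof -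
    have "x ^ (k - i) = x * p * x ^ (m - i)" if "i \<le> m" for i
    proof -
      have "k - i = Suc (k - m - 1) + (m - i)"
        using that assms(2) by arith
      then show ?thesis
        unfolding p_def by (simp only: power_add power_Suc)
    qed
    then show ?thesis
      unfolding hyp_pgf_def hyp_mass_def hyp_weight_def sum_distrib_left assms(1)
      by (intro arg_cong[where f = "\<lambda>s. s / _"] sum.cong) auto
  qed
  have f': "deriv (hyp_pgf d k) x
      = p * (real k * hyp_mass k m x - hyp_moment k m x) / real (d choose k)"
  proof -
    have "real (k choose i) * real (m choose i) * (real (k - i) * x ^ (k - i - 1))
        = p * ((real k - real i) * hyp_weight k m x i)" if "i \<le> m" for i
    proof -
      have "k - i - 1 = (k - m - 1) + (m - i)"
        using that assms(2) by arith
      then have "x ^ (k - i - 1) = p * x ^ (m - i)"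
        unfolding p_def by (simp only: power_add)
      then show ?thesis
        using that assms(2) by (simp add: hyp_weight_def of_nat_diff)
    qed
    then have "(\<Sum>i=0..m. real (k choose i) * real (m choose i) * (real (k - i) * x ^ (k - i - 1)))
        = p * (\<Sum>i=0..m. (real k - real i) * hyp_weight k m x i)"
      unfolding sum_distrib_left by (intro sum.cong) auto
    also have "(\<Sum>i=0..m. (real k - real i) * hyp_weight k m x i)
        = real k * hyp_mass k m x - hyp_moment k m x"
      unfolding hyp_mass_def hyp_moment_def
      by (simp add: left_diff_distrib sum_subtractf sum_distrib_left)
    finally show ?thesis
      using deriv_hyp_pgf[of k d x] assms by simp
  qed
  have "0 < real (d choose k)"
    using assms by simp
  then show ?thesis
    unfolding f f' hyp_gap_def p_def by (simp add: field_simps)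
qed

lemma x_times_hyp_moment:
  "x * hyp_moment k m x =
     (\<Sum>i=0..m. hyp_weight k m x i * (real (k - i) * real (m - i) / real (Suc i)))"
proof (cases m)
  case 0
  then show ?thesis by (simp add: hyp_moment_def)
next
  case (Suc n)
  have shift: "hyp_moment k m x = (\<Sum>i=0..n. real (Suc i) * hyp_weight k m x (Suc i))"
    unfolding hyp_moment_def Suc sum.atLeast0_atMost_Suc_shift by simp
  have drop_last: "(\<Sum>i=0..m. hyp_weight k m x i * (real (k - i) * real (m - i) / real (Suc i)))
      = (\<Sum>i=0..n. hyp_weight k m x i * (real (k - i) * real (m - i) / real (Suc i)))"
    unfolding Suc sum.atLeast0_atMost_Suc by simp
  have "x * (real (Suc i) * hyp_weight k m x (Suc i))
      = hyp_weight k m x i * (real (k - i) * real (m - i) / real (Suc i))"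
    if "i \<le> n" for i
  proof -
    have binom: "real (n' choose Suc i) = real (n' - i) * real (n' choose i) / real (Suc i)" for n'
      using Suc_times_binomial_Suc[of i n', THEN arg_cong[where f = real]]
      by (simp add: field_simps)
    have "x ^ (m - i) = x * x ^ (m - Suc i)"
      using that Suc by (simp add: Suc_diff_le)
    then show ?thesis
      unfolding hyp_weight_def binom by (simp add: field_simps del: of_nat_Suc)
  qed
  then show ?thesis
    unfolding shift drop_last sum_distrib_left by (intro sum.cong) auto
qed

lemma hyp_gap_eq_sum:
  assumes "m \<le> k"
  shows "hyp_gap k m x =
    (\<Sum>i=0..m. hyp_weight k m x i * ((real k - real i) * (2 * real i + 1 - real m) / (real i + 1)))"
proof -
  have "hyp_gap k m x = (real k * hyp_mass k m x - hyp_moment k m x) - x * hyp_moment k m x"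
    by (simp add: hyp_gap_def algebra_simps)
  also have "real k * hyp_mass k m x - hyp_moment k m x
      = (\<Sum>i=0..m. hyp_weight k m x i * (real k - real i))"
    by (simp add: hyp_mass_def hyp_moment_def sum_distrib_left sum_subtractf algebra_simps)
  also note x_times_hyp_moment
  also have "(\<Sum>i=0..m. hyp_weight k m x i * (real k - real i))
      - (\<Sum>i=0..m. hyp_weight k m x i * (real (k - i) * real (m - i) / real (Suc i)))
      = (\<Sum>i=0..m. hyp_weight k m x i * (real k - real i)
      - hyp_weight k m x i * (real (k - i) * real (m - i) / real (Suc i)))"
    by (simp add: sum_subtractf)
  also have "\<dots> = (\<Sum>i=0..m. hyp_weight k m x i *
      ((real k - real i) * (2 * real i + 1 - real m) / (real i + 1)))"
    using assms by (intro sum.cong) (auto simp: of_nat_diff field_simps)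
  finally show ?thesis .
qed

lemma hyp_gap_neg_mono:
  assumes "m \<le> k" and "0 < y" "y \<le> x" and "hyp_gap k m y < 0"
  shows "hyp_gap k m x < 0"
proof -
  define a where "a i = real (k choose i) * real (m choose i) *
    ((real k - real i) * (2 * real i + 1 - real m) / (real i + 1))" for i
  have gap: "hyp_gap k m z = (\<Sum>i=0..m. a i * z ^ (m - i))" for z
    unfolding hyp_gap_eq_sum[OF \<open>m \<le> k\<close>] hyp_weight_def a_def by (simp add: algebra_simps)
  have sign: "a i \<le> 0 \<and> m - m div 2 \<le> m - i \<or> 0 \<le> a i \<and> m - i \<le> m - m div 2"
    if "i \<in> {0..m}" for i
  proof (cases "2 * i + 1 \<le> m")
    case True
    then have "a i \<le> 0"
      using that \<open>m \<le> k\<close> unfolding a_def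
      by (intro mult_nonneg_nonpos divide_nonpos_pos mult_nonneg_nonpos) auto
    with True show ?thesis by auto
  next
    case False
    then have "0 \<le> a i"
      using that \<open>m \<le> k\<close> unfolding a_def by (intro mult_nonneg_nonneg divide_nonneg_pos) auto
    with False show ?thesis by auto
  qed
  have "(\<Sum>i=0..m. a i * y ^ (m - i)) < 0"
    using \<open>hyp_gap k m y < 0\<close> unfolding gap .
  from sum_powers_neg_mono[OF sign \<open>0 < y\<close> \<open>y \<le> x\<close> this] show ?thesis
    unfolding gap .
qed

lemma hyp_gap_ratio_scaled:
  assumes "q \<noteq> 0"
  shows "hyp_gap k m (p / q) * q ^ Suc m =
    (\<Sum>i=0..m. real (k choose i) * real (m choose i) * p ^ (m - i) * q ^ i
       * (real k * q - (p + q) * real i))"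
proof -
  have gap: "hyp_gap k m (p / q)
      = (\<Sum>i=0..m. hyp_weight k m (p / q) i * (real k - (p / q + 1) * real i))"
    unfolding hyp_gap_def hyp_mass_def hyp_moment_def
    by (simp add: sum_distrib_left sum_subtractf algebra_simps)
  have scaled_term: "hyp_weight k m (p / q) i * (real k - (p / q + 1) * real i) * q ^ Suc m =
      real (k choose i) * real (m choose i) * p ^ (m - i) * q ^ i * (real k * q - (p + q) * real i)"
    if "i \<le> m" for i
  proof -
    have "q ^ Suc m = q ^ (m - i) * q ^ i * q"
      using that by (simp flip: power_add)
    then have "hyp_weight k m (p / q) i * (real k - (p / q + 1) * real i) * q ^ Suc m =
        real (k choose i) * real (m choose i) * ((p / q) ^ (m - i) * q ^ (m - i)) * q ^ i
          * ((real k - (p / q + 1) * real i) * q)"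
      by (simp add: hyp_weight_def)
    also have "\<dots> = real (k choose i) * real (m choose i) * p ^ (m - i) * q ^ i
          * (real k * q - (p + q) * real i)"
      using assms by (simp add: power_divide algebra_simps)
    finally show ?thesis .
  qed
  show ?thesis
    unfolding gap sum_distrib_right by (intro sum.cong refl scaled_term) simp
qed

lemma hyp_gap_small_pairs:
  assumes "(m, k) \<in> {(3,6),(4,7),(4,8),(5,8),(5,9),(5,10),(6,9),(6,10),(7,10),(8,11),(9,12)}"
  shows "hyp_gap k m ((3 * real k - 2 * real m) / real m) < 0"
proof -
  have "0 < real m"
    using assms by auto
  have "(\<Sum>i=0..m. real (k choose i) * real (m choose i) * (3 * real k - 2 * real m) ^ (m - i)
      * real m ^ i * (real k * real m - (3 * real k - 2 * real m + real m) * real i)) < 0"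
    using assms
    by (elim insertE emptyE) (simp_all add: atLeastAtMost_upt upt_rec binomial_code
        fold_atLeastAtMost_nat.simps fact_numeral flip: numeral_2_eq_2)
  then have "hyp_gap k m ((3 * real k - 2 * real m) / real m) * real m ^ Suc m < 0"
    using hyp_gap_ratio_scaled[of "real m" k m "3 * real k - 2 * real m"] \<open>0 < real m\<close> by simp
  with \<open>0 < real m\<close> show ?thesis
    by (simp add: mult_less_0_iff)
qed

lemma hyp_moment_quadratic_bound:
  fixes k m :: nat and x :: real
  defines "A \<equiv> hyp_mass k m x" and "B \<equiv> hyp_moment k m x"
  assumes "m \<le> k" and "0 < x"
  shows "(real k * A - B) * (real m * A - B) \<le> x * B * (A + B)"
proof -
  define K M where "K = real k + 1" and "M = real m + 1"
  define H where "H = (\<Sum>i=0..m. hyp_weight k m x i / (real i + 1))"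
  \<comment> \<open>\<open>(k-i)(m-i)/(i+1) = K M / u - (K + M) + u\<close> with \<open>u = i + 1\<close>; only \<open>1/u\<close> is non-linear.\<close>
  have "x * B = (\<Sum>i=0..m. hyp_weight k m x i * (K * M / (real i + 1) - (K + M) + (real i + 1)))"
    unfolding B_def x_times_hyp_moment
    using assms(3) by (intro sum.cong) (auto simp: K_def M_def of_nat_diff field_simps)
  also have "\<dots> = K * M * H - (K + M) * A + (A + B)"
    unfolding A_def B_def H_def hyp_mass_def hyp_moment_def
    by (simp add: sum.distrib sum_subtractf sum_distrib_left algebra_simps)
  finally have xB: "x * B = K * M * H - (K + M) * A + (A + B)" .
  have "A\<^sup>2 \<le> (A + B) * H"
  proof -
    have "(A + B) = (\<Sum>i=0..m. hyp_weight k m x i * (real i + 1))"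
      unfolding A_def B_def hyp_mass_def hyp_moment_def by (simp add: sum.distrib algebra_simps)
    then show ?thesis
      unfolding A_def H_def hyp_mass_def
      using sum_weighted_inverse_ge[of "{0..m}" "hyp_weight k m x" "\<lambda>i. real i + 1"]
        hyp_weight_nonneg \<open>0 < x\<close> by (simp add: less_imp_le)
  qed
  then have "K * M * A\<^sup>2 \<le> K * M * ((A + B) * H)"
    by (intro mult_left_mono) (auto simp: K_def M_def)
  then have "(K * A - (A + B)) * (M * A - (A + B)) \<le> x * B * (A + B)"
    unfolding xB by (simp add: algebra_simps power2_eq_square)
  then show ?thesis
    by (simp add: K_def M_def algebra_simps)
qed

lemma hyp_gap_neg_large_m:
  assumes "1 \<le> m" "m \<le> k" "0 < x" and large: "2 * real k < (real m - 1) * (x + 1)"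
  shows "hyp_gap k m x < 0"
proof (rule ccontr)
  define A B where "A = hyp_mass k m x" and "B = hyp_moment k m x"
  assume "\<not> hyp_gap k m x < 0"
  then have mean_small: "(x + 1) * B \<le> real k * A"
    by (simp add: hyp_gap_def A_def B_def)
  have A: "0 < A" and B: "0 < B"
    using assms hyp_mass_pos hyp_moment_pos by (auto simp: A_def B_def)
  have xB: "x * B \<le> real k * A - B"
    using mean_small by (simp add: algebra_simps)
  have "(real k * A - B) * (real m * A - B) \<le> x * B * (A + B)"
    using hyp_moment_quadratic_bound[OF \<open>m \<le> k\<close> \<open>0 < x\<close>] by (simp add: A_def B_def)
  also have "\<dots> \<le> (real k * A - B) * (A + B)"
    using xB A B by (intro mult_right_mono) auto
  finally have "(real k * A - B) * (real m * A - B) \<le> (real k * A - B) * (A + B)" .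
  moreover have "0 < real k * A - B"
    using xB mult_pos_pos[OF \<open>0 < x\<close> B] by linarith
  ultimately have "real m * A - B \<le> A + B"
    by (simp add: mult_le_cancel_left_pos)
  then have "(x + 1) * ((real m - 1) * A) \<le> (x + 1) * (2 * B)"
    using \<open>0 < x\<close> by (intro mult_left_mono) (auto simp: algebra_simps)
  also have "\<dots> \<le> 2 * real k * A"
    using mean_small by simp
  finally have "((real m - 1) * (x + 1)) * A \<le> (2 * real k) * A"
    by (simp add: algebra_simps)
  with A large show False
    by (simp add: mult_le_cancel_right)
qed

lemma small_pairs_or_large_m:
  fixes m k :: nat
  assumes "3 \<le> m" "m + 3 \<le> k" "k \<le> 2 * m"
  shows "(m, k) \<in> {(3,6),(4,7),(4,8),(5,8),(5,9),(5,10),(6,9),(6,10),(7,10),(8,11),(9,12)}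
         \<or> m * (m - 1) < k * (m - 3)"
proof (cases "10 \<le> m")
  case True
  have "(m + 3) * (m - 3) \<le> k * (m - 3)"
    using assms by (intro mult_right_mono) auto
  moreover have "m * (m - 1) < (m + 3) * (m - 3)"
    using True by (cases m) (auto simp: algebra_simps)
  ultimately show ?thesis by linarith
next
  case False
  then consider "m = 3" | "m = 4" | "m = 5" | "m = 6" | "m = 7" | "m = 8" | "m = 9"
    using assms(1) by linarith
  then show ?thesis
    using assms by cases auto
qed

lemma hyp_gap_neg_above_threshold:
  assumes "3 \<le> m" "m + 3 \<le> k" "k \<le> 2 * m"
    and threshold: "(3 * real k - 2 * real m) / real m \<le> x"
  shows "hyp_gap k m x < 0"
proof -
  have m: "0 < real m" and "m \<le> k"
    using assms by auto
  have x0: "0 < (3 * real k - 2 * real m) / real m"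
    using assms by (intro divide_pos_pos) auto
  from small_pairs_or_large_m[OF assms(1-3)] show ?thesis
  proof
    assume "(m, k) \<in> {(3,6),(4,7),(4,8),(5,8),(5,9),(5,10),(6,9),(6,10),(7,10),(8,11),(9,12)}"
    from hyp_gap_neg_mono[OF \<open>m \<le> k\<close> x0 threshold hyp_gap_small_pairs[OF this]]
    show ?thesis .
  next
    assume "m * (m - 1) < k * (m - 3)"
    then have "real (m * (m - 1)) < real (k * (m - 3))"
      by (simp only: of_nat_less_iff)
    then have "real m * (real m - 1) < real k * (real m - 3)"
      using assms(1) by (simp add: of_nat_diff)
    then have "2 * real k * real m < (real m - 1) * (3 * real k - real m)"
      by (simp add: algebra_simps)
    also have "\<dots> \<le> (real m - 1) * ((x + 1) * real m)"
      using threshold m assms(1) by (intro mult_left_mono) (auto simp: field_simps)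
    finally have "(2 * real k) * real m < ((real m - 1) * (x + 1)) * real m"
      by (simp add: algebra_simps)
    then have "2 * real k < (real m - 1) * (x + 1)"
      by (rule mult_right_less_imp_less) (use m in simp)
    then show ?thesis
      using hyp_gap_neg_large_m[of m k x] assms x0 threshold by auto
  qed
qed

theorem lemma13:
  fixes d k :: nat and x :: real
  assumes "d \<ge> 9"
    and "real d / 2 + 1 < real k" and "real k \<le> 2 * real d / 3"
    and "x \<ge> (5 * real k - 2 * real d) / (real d - real k)"
  shows "(x + 1) * deriv (hyp_pgf d k) x < real k * hyp_pgf d k x"
proof -
  define m where "m = d - k"
  have "d + 2 < 2 * k" "3 * k \<le> 2 * d"
    using assms(2,3) by linarith+
  then have d: "d = k + m" and m: "3 \<le> m" "m + 3 \<le> k" "k \<le> 2 * m"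
    using assms(1) unfolding m_def by linarith+
  have threshold: "(3 * real k - 2 * real m) / real m \<le> x"
    using assms(4) by (simp add: d)
  have "0 < (3 * real k - 2 * real m) / real m"
    using m by (intro divide_pos_pos) auto
  with threshold have "0 < x"
    by linarith
  have "x ^ (k - m - 1) * hyp_gap k m x / real (d choose k) < 0"
    using hyp_gap_neg_above_threshold[OF m threshold] \<open>0 < x\<close> d
    by (intro divide_neg_pos mult_pos_neg) auto
  moreover have "m < k"
    using m by simp
  ultimately show ?thesis
    using hyp_pgf_gap[OF d, of x] by linarith
qed

end
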